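(* Let $n\ge1$, $\mathbf{k}=(k_1,\dots,k_n)$ positive integers, $D\in\mathcal{D}_{\mathbf{k}}$, and $R=R(D)$. Then the directed multigraph $G_R$ is balanced: every vertex $a$ of $G_R$ has in-degree equal to its out-degree, and both equal $|S(a)|$.
   Context: $|\mathbf{k}|=k_1+\cdots+k_n$, $N=n+|\mathbf{k}|$. $\mathcal{D}_{\mathbf{k}}$: sequences $(a_1,\dots,a_N)$ whose positive entries are $k_1,\dots,k_n$ in order, other entries $-1$, all partial sums $a_1+\cdots+a_{i-1}\ge0$. SW-word: $S^{k_j}$ for up step $k_j$, $W$ for $-1$. Filling Algorithm producing $T(D)$: $n$ columns, column $i$ with $k_i+1$ cells in rows $1,\dots,k_i+1$; place $1$ at top of column 1; having placed $1,\dots,i-1$, the lowest filled entry of column $j$ is active if not in row $k_j+1$; if the $i$-th letter is $W$ place $i$ below the smallest active entry, otherwise at the top of the leftmost empty column; continue until $1,\dots,N$ placed. Entries of $T(D)$ are indices; $t_i$ is the top index of column $i$. Ranking Algorithm producing $R(D)$: ranks $0,\dots,k_1$ to column-1 indices top to bottom; for $i=2,\dots,n$, if index $t_i-1$ has rank $a$, column $i$ gets ranks $a,\dots,a+k_i$ top to bottom. $G_R$ is the directed multigraph whose vertices are the ranks appearing in $R$, with one directed edge for each index of $T(D)$: if the index is $t_i$ with rank $a$, the edge is $a\to a+k_i$; if the index is not in row 1 and has rank $b$, the edge is $b\to b-1$. $S(a)$ is the set of indices with rank $a$. *)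

theory Defs
  imports "HOL-Library.Multiset"
begin

definition Dk :: "nat list \<Rightarrow> int list set" where
  "Dk k = {a. length a = length k + sum_list k
             \<and> filter (\<lambda>x. x > 0) a = map int k
             \<and> (\<forall>x\<in>set a. x > 0 \<or> x = -1)
             \<and> (\<forall>i < length a. sum_list (take i a) \<ge> 0)}"

text \<open>The state is the list of the n columns (0-based column numbers),
  each given as the list of its entries (indices) from top to bottom; column j has
  k!j + 1 cells. Index i with letter x (x > 0 means S, x = -1 means W) is placed:
  for S at the top of the leftmost empty column, for W directly below the smallest
  active entry, where the lowest filled entry of a nonempty column j is active iff
  it is not in row k_j + 1, i.e. the column has fewer than k_j + 1 entries.\<close>
definition active_cols :: "nat list \<Rightarrow> nat list list \<Rightarrow> nat set" where
  "active_cols k cols = {j. j < length cols \<and> cols ! j \<noteq> [] \<and> length (cols ! j) < k ! j + 1}"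

definition fill_step :: "nat list \<Rightarrow> nat list list \<Rightarrow> nat \<times> int \<Rightarrow> nat list list" where
  "fill_step k cols ix =
     (let i = fst ix; x = snd ix in
      if x > 0 then
        (let j = (LEAST j. j < length cols \<and> cols ! j = []) in cols[j := [i]])
      else
        (let j = (ARG_MIN (\<lambda>j. last (cols ! j)) j. j \<in> active_cols k cols)
         in cols[j := cols ! j @ [i]]))"

definition fillT :: "nat list \<Rightarrow> int list \<Rightarrow> nat list list" where
  "fillT k D = foldl (fill_step k) (replicate (length k) []) (zip [1..<length D + 1] D)"

text \<open>Column (0-based) and row (0-based, row 0 = row 1 of the paper) of an index.\<close>
definition col_of :: "nat list list \<Rightarrow> nat \<Rightarrow> nat" where
  "col_of T x = (LEAST j. j < length T \<and> x \<in> set (T ! j))"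

definition row_of :: "nat list list \<Rightarrow> nat \<Rightarrow> nat" where
  "row_of T x = (LEAST r. r < length (T ! col_of T x) \<and> T ! col_of T x ! r = x)"

definition top_idx :: "nat list list \<Rightarrow> nat \<Rightarrow> nat" where
  "top_idx T j = hd (T ! j)"

text \<open>Ranking Algorithm: st!j is the rank of the top of column j; the entry in row r
  (0-based) of column j gets rank st!j + r.\<close>
definition rank_in :: "nat list list \<Rightarrow> nat list \<Rightarrow> nat \<Rightarrow> nat" where
  "rank_in T st x = st ! col_of T x + row_of T x"

fun starts :: "nat list list \<Rightarrow> nat \<Rightarrow> nat list" where
  "starts T 0 = [0]"
| "starts T (Suc j) = (let st = starts T j in st @ [rank_in T st (top_idx T (Suc j) - 1)])"

definition rankR :: "nat list \<Rightarrow> int list \<Rightarrow> nat \<Rightarrow> nat" where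
  "rankR k D x = (let T = fillT k D in rank_in T (starts T (length k - 1)) x)"

definition GR_vertices :: "nat list \<Rightarrow> int list \<Rightarrow> nat set" where
  "GR_vertices k D = rankR k D ` {1..length D}"

definition GR_edge :: "nat list \<Rightarrow> int list \<Rightarrow> nat \<Rightarrow> nat \<times> nat" where
  "GR_edge k D x = (let T = fillT k D; a = rankR k D x in
     if row_of T x = 0 then (a, a + k ! col_of T x) else (a, a - 1))"

definition GR_edges :: "nat list \<Rightarrow> int list \<Rightarrow> (nat \<times> nat) multiset" where
  "GR_edges k D = mset (map (GR_edge k D) [1..<length D + 1])"

definition out_deg :: "(nat \<times> nat) multiset \<Rightarrow> nat \<Rightarrow> nat" where
  "out_deg E a = size (filter_mset (\<lambda>e. fst e = a) E)"

definition in_deg :: "(nat \<times> nat) multiset \<Rightarrow> nat \<Rightarrow> nat" where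
  "in_deg E a = size (filter_mset (\<lambda>e. snd e = a) E)"

definition S_rank :: "nat list \<Rightarrow> int list \<Rightarrow> nat \<Rightarrow> nat set" where
  "S_rank k D a = {x \<in> {1..length D}. rankR k D x = a}"

end

theory Submission
  imports Defs
begin

text \<open>While the Filling Algorithm reads D, the started columns contain exactly
  a_1 + ... + a_i empty cells after i letters. Since this partial sum is positive before
  every W, some entry is active whenever a W is read, and since the total sum of D is 0,
  the finished tableau T(D) has exactly k_j + 1 entries in column j, each index 1..N
  occurring once. If the top of column j has rank a, that column contributes the edges
  with sources a, a+1, ..., a+k_j and targets a+k_j, a, ..., a+k_j-1: the same multiset.
  Hence sources and targets of G_R agree as multisets, and the out-degree of a vertex
  counts the indices of that rank.\<close>

lemma Dk_sum_list_eq_0: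
  assumes "D \<in> Dk k"
  shows "sum_list D = 0"
proof -
  have len: "length D = length k + sum_list k" and ups: "filter (\<lambda>x. x > 0) D = map int k"
    and letters: "\<forall>x\<in>set D. x > 0 \<or> x = -1"
    using assms by (auto simp: Dk_def)
  have "sum_list D = sum_list (filter (\<lambda>x. x > 0) D) - int (length (filter (\<lambda>x. \<not> x > 0) D))"
    using letters by (induction D) auto
  moreover have "length (filter (\<lambda>x. x > 0) D) + length (filter (\<lambda>x. \<not> x > 0) D) = length D"
    by (rule sum_length_filter_compl)
  moreover have "sum_list (map int k) = int (sum_list k)"
    by (induction k) auto
  ultimately show ?thesis
    using len ups by simp
qed

lemma Dk_prefix_sum_nonneg:
  assumes "D \<in> Dk k" and "i \<le> length D"
  shows "sum_list (take i D) \<ge> 0"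
proof (cases "i < length D")
  case True
  then show ?thesis using assms(1) by (simp add: Dk_def)
next
  case False
  then show ?thesis using assms Dk_sum_list_eq_0 by simp
qed

definition count_S :: "int list \<Rightarrow> nat \<Rightarrow> nat" where
  "count_S D i = length (filter (\<lambda>x. x > 0) (take i D))"

lemma count_S_le:
  assumes "D \<in> Dk k"
  shows "count_S D i \<le> length k"
proof -
  have "count_S D i \<le> length (filter (\<lambda>x. x > 0) D)"
    unfolding count_S_def by (metis append_take_drop_id filter_append length_append le_add1)
  then show ?thesis
    using assms by (simp add: Dk_def)
qed

lemma Dk_nth_S:
  assumes "D \<in> Dk k" and "i < length D" and "D ! i > 0"
  shows "count_S D i < length k" and "D ! i = int (k ! count_S D i)"
proof -
  have "D = take i D @ D ! i # drop (Suc i) D"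
    using assms(2) by (rule id_take_nth_drop)
  then have "filter (\<lambda>x. x > 0) D = filter (\<lambda>x. x > 0) (take i D @ D ! i # drop (Suc i) D)"
    by (rule arg_cong)
  then have ups: "map int k = filter (\<lambda>x. x > 0) (take i D) @ D ! i # filter (\<lambda>x. x > 0) (drop (Suc i) D)"
    using assms(1,3) by (simp add: Dk_def)
  then have "length k = count_S D i + Suc (length (filter (\<lambda>x. x > 0) (drop (Suc i) D)))"
    unfolding count_S_def by (metis length_append length_map length_Cons)
  then show less: "count_S D i < length k"
    by simp
  have "map int k ! count_S D i = D ! i"
    unfolding ups count_S_def by (simp add: nth_append)
  then show "D ! i = int (k ! count_S D i)"
    using less by simp
qed

lemma mset_concat_list_update:
  "p < length xss \<Longrightarrow> mset (concat (xss[p := ys])) + mset (xss ! p) = mset (concat xss) + mset ys"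
proof (induction xss arbitrary: p)
  case (Cons xs xss)
  then show ?case by (cases p) (simp_all add: ac_simps)
qed simp

definition fill_inv :: "nat list \<Rightarrow> int list \<Rightarrow> nat \<Rightarrow> nat list list \<Rightarrow> bool" where
  "fill_inv k D i cols \<longleftrightarrow> length cols = length k
    \<and> (\<forall>j < count_S D i. cols ! j \<noteq> [] \<and> length (cols ! j) \<le> k ! j + 1)
    \<and> (\<forall>j < length k. count_S D i \<le> j \<longrightarrow> cols ! j = [])
    \<and> int (\<Sum>j < count_S D i. k ! j + 1 - length (cols ! j)) = sum_list (take i D)
    \<and> mset (concat cols) = mset [1..<i + 1]"

lemma fill_inv_step_S:
  assumes D: "D \<in> Dk k" and i: "i < length D" and S: "D ! i > 0"
    and inv: "fill_inv k D i cols"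
  shows "fill_inv k D (Suc i) (fill_step k cols (i + 1, D ! i))"
proof -
  let ?s = "count_S D i"
  let ?cols = "cols[?s := [i + 1]]"
  have len: "length cols = length k"
    and started: "\<forall>j < ?s. cols ! j \<noteq> [] \<and> length (cols ! j) \<le> k ! j + 1"
    and unstarted: "\<forall>j < length k. ?s \<le> j \<longrightarrow> cols ! j = []"
    and gaps: "int (\<Sum>j < ?s. k ! j + 1 - length (cols ! j)) = sum_list (take i D)"
    and entries: "mset (concat cols) = mset [1..<i + 1]"
    using inv by (auto simp: fill_inv_def)
  have s: "?s < length k" and Di: "D ! i = int (k ! ?s)"
    using Dk_nth_S[OF D i S] by auto
  have count: "count_S D (Suc i) = Suc ?s"
    using i S by (simp add: count_S_def take_Suc_conv_app_nth)
  have "(LEAST j. j < length cols \<and> cols ! j = []) = ?s"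
  proof (rule Least_equality)
    show "?s < length cols \<and> cols ! ?s = []"
      using s len unstarted by simp
    show "?s \<le> j" if "j < length cols \<and> cols ! j = []" for j
      using that started by (meson not_le)
  qed
  then have step: "fill_step k cols (i + 1, D ! i) = ?cols"
    using S by (simp add: fill_step_def Let_def)
  have "(\<Sum>j < Suc ?s. k ! j + 1 - length (?cols ! j)) = (\<Sum>j < ?s. k ! j + 1 - length (cols ! j)) + k ! ?s"
    using len s by simp
  then have "int (\<Sum>j < Suc ?s. k ! j + 1 - length (?cols ! j)) = sum_list (take (Suc i) D)"
    using gaps Di i by (simp add: take_Suc_conv_app_nth)
  moreover have "mset (concat ?cols) = mset [1..<Suc i + 1]"
    using mset_concat_list_update[of ?s cols "[i + 1]"] len s unstarted entries by simp
  ultimately show ?thesis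
    unfolding fill_inv_def step count
    using len started unstarted s by (auto simp: nth_list_update less_Suc_eq)
qed

lemma fill_inv_step_W:
  assumes D: "D \<in> Dk k" and i: "i < length D" and W: "\<not> D ! i > 0"
    and inv: "fill_inv k D i cols"
  shows "fill_inv k D (Suc i) (fill_step k cols (i + 1, D ! i))"
proof -
  let ?s = "count_S D i"
  define p where "p = (ARG_MIN (\<lambda>j. last (cols ! j)) j. j \<in> active_cols k cols)"
  let ?cols = "cols[p := cols ! p @ [i + 1]]"
  have len: "length cols = length k"
    and started: "\<forall>j < ?s. cols ! j \<noteq> [] \<and> length (cols ! j) \<le> k ! j + 1"
    and unstarted: "\<forall>j < length k. ?s \<le> j \<longrightarrow> cols ! j = []"
    and gaps: "int (\<Sum>j < ?s. k ! j + 1 - length (cols ! j)) = sum_list (take i D)"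
    and entries: "mset (concat cols) = mset [1..<i + 1]"
    using inv by (auto simp: fill_inv_def)
  have Di: "D ! i = -1"
    using D i W by (auto simp: Dk_def)
  have count: "count_S D (Suc i) = ?s"
    using i W by (simp add: count_S_def take_Suc_conv_app_nth)
  have prefix: "sum_list (take (Suc i) D) = sum_list (take i D) - 1"
    using i Di by (simp add: take_Suc_conv_app_nth)
  then have "sum_list (take i D) \<ge> 1"
    using Dk_prefix_sum_nonneg[OF D, of "Suc i"] i by simp
  then have "\<exists>j < ?s. length (cols ! j) < k ! j + 1"
    using gaps by (metis (no_types, lifting) diff_is_0_eq not_le of_nat_0 sum.neutral lessThan_iff
        zero_less_one not_less)
  then obtain j0 where "j0 < ?s" "length (cols ! j0) < k ! j0 + 1"
    by blast
  then have "j0 \<in> active_cols k cols"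
    using started len count_S_le[OF D, of i] by (auto simp: active_cols_def)
  then have "p \<in> active_cols k cols"
    unfolding p_def by (rule arg_min_natI)
  then have p: "p < ?s" "cols ! p \<noteq> []" "length (cols ! p) < k ! p + 1"
    using len unstarted by (auto simp: active_cols_def not_le[symmetric])
  have step: "fill_step k cols (i + 1, D ! i) = ?cols"
    using W by (simp add: fill_step_def Let_def p_def)
  have p_len: "p < length cols"
    using p len count_S_le[OF D, of i] by simp
  have "(\<Sum>j \<in> {..<?s} - {p}. k ! j + 1 - length (?cols ! j))
      = (\<Sum>j \<in> {..<?s} - {p}. k ! j + 1 - length (cols ! j))"
    by (rule sum.cong) auto
  moreover have "k ! p + 1 - length (?cols ! p) + 1 = k ! p + 1 - length (cols ! p)"
    using p p_len by simp
  ultimately have "(\<Sum>j < ?s. k ! j + 1 - length (?cols ! j)) + 1 = (\<Sum>j < ?s. k ! j + 1 - length (cols ! j))"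
    using p(1) by (simp add: sum.remove[of "{..<?s}" p])
  then have "int (\<Sum>j < ?s. k ! j + 1 - length (?cols ! j)) = sum_list (take (Suc i) D)"
    using gaps prefix by linarith
  moreover have "mset (concat ?cols) = mset [1..<Suc i + 1]"
    using mset_concat_list_update[of p cols "cols ! p @ [i + 1]"] len p count_S_le[OF D, of i] entries
    by simp
  moreover have "\<forall>j < ?s. ?cols ! j \<noteq> [] \<and> length (?cols ! j) \<le> k ! j + 1"
    using started p p_len by (auto simp: nth_list_update)
  ultimately show ?thesis
    unfolding fill_inv_def step count
    using len unstarted p by auto
qed

lemma fill_inv_foldl:
  assumes D: "D \<in> Dk k" and "i \<le> length D"
  shows "fill_inv k D i (foldl (fill_step k) (replicate (length k) []) (zip [1..<i + 1] (take i D)))"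
  using assms(2)
proof (induction i)
  case 0
  show ?case by (simp add: fill_inv_def count_S_def)
next
  case (Suc i)
  then have i: "i < length D" by simp
  have "zip [1..<Suc i + 1] (take (Suc i) D) = zip [1..<i + 1] (take i D) @ [(i + 1, D ! i)]"
    using i by (simp add: take_Suc_conv_app_nth)
  then show ?case
    using Suc fill_inv_step_S[OF D i] fill_inv_step_W[OF D i] by (cases "D ! i > 0") simp_all
qed

lemma fillT_shape:
  assumes D: "D \<in> Dk k"
  shows "length (fillT k D) = length k"
    and "\<And>j. j < length k \<Longrightarrow> length (fillT k D ! j) = k ! j + 1"
    and "mset (concat (fillT k D)) = mset [1..<length D + 1]"
proof -
  let ?T = "fillT k D"
  have "fill_inv k D (length D) ?T"
    using fill_inv_foldl[OF D, of "length D"] by (simp add: fillT_def)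
  moreover have "count_S D (length D) = length k"
    using D by (simp add: count_S_def Dk_def)
  ultimately have len: "length ?T = length k"
    and started: "\<forall>j < length k. length (?T ! j) \<le> k ! j + 1"
    and gaps: "int (\<Sum>j < length k. k ! j + 1 - length (?T ! j)) = sum_list D"
    and entries: "mset (concat ?T) = mset [1..<length D + 1]"
    by (auto simp: fill_inv_def)
  have "(\<Sum>j < length k. k ! j + 1 - length (?T ! j)) = 0"
    using gaps Dk_sum_list_eq_0[OF D] by (metis of_nat_eq_0_iff)
  then show "\<And>j. j < length k \<Longrightarrow> length (?T ! j) = k ! j + 1"
    using started by (simp add: le_antisym)
  show "length ?T = length k" and "mset (concat ?T) = mset [1..<length D + 1]"
    using len entries by simp_all
qed

lemma distinct_concat_nth_unique:
  assumes "distinct (concat xss)" and "i < length xss" and "j < length xss"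
    and "x \<in> set (xss ! i)" and "x \<in> set (xss ! j)"
  shows "i = j"
  using assms
proof (induction xss arbitrary: i j)
  case (Cons xs xss)
  have "x \<notin> set xs" if "l < length xss" and "x \<in> set (xss ! l)" for l
    using Cons.prems(1) that by (auto dest: nth_mem)
  then show ?case
    using Cons by (cases i; cases j) auto
qed simp

lemma
  assumes "distinct (concat T)" and "j < length T" and "r < length (T ! j)"
  shows col_of_nth: "col_of T (T ! j ! r) = j"
    and row_of_nth: "row_of T (T ! j ! r) = r"
proof -
  show col: "col_of T (T ! j ! r) = j"
    unfolding col_of_def
  proof (rule Least_equality)
    show "j < length T \<and> T ! j ! r \<in> set (T ! j)"
      using assms(2,3) by simp
    show "j \<le> l" if "l < length T \<and> T ! j ! r \<in> set (T ! l)" for l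
      using distinct_concat_nth_unique[OF assms(1,2) _ nth_mem[OF assms(3)]] that by fastforce
  qed
  have "distinct (T ! j)"
    using assms(1,2) by (simp add: distinct_concat_iff)
  then show "row_of T (T ! j ! r) = r"
    unfolding row_of_def col
    using assms(3) by (auto intro!: Least_equality simp: nth_eq_iff_index_eq)
qed

lemma GR_edge_column_balanced:
  assumes D: "D \<in> Dk k" and j: "j < length k"
  shows "image_mset (snd \<circ> GR_edge k D) (mset (fillT k D ! j))
       = image_mset (fst \<circ> GR_edge k D) (mset (fillT k D ! j))"
proof -
  define T where "T = fillT k D"
  \<comment> \<open>How the Ranking Algorithm chooses the rank a of the top does not matter.\<close>
  define a where "a = starts T (length k - 1) ! j"
  have len: "length T = length k" "length (T ! j) = k ! j + 1"
    using fillT_shape[OF D] j by (simp_all add: T_def)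
  have "distinct (concat T)"
    using mset_eq_imp_distinct_iff[OF fillT_shape(3)[OF D]] by (simp add: T_def)
  then have edge: "GR_edge k D (T ! j ! r) = (a + r, if r = 0 then a + k ! j else a + r - 1)"
    if "r < length (T ! j)" for r
    using that j len by (simp add: GR_edge_def rankR_def rank_in_def Let_def col_of_nth row_of_nth a_def
        flip: T_def)
  have "map (snd \<circ> GR_edge k D) (T ! j) = (a + k ! j) # [a..<a + k ! j]"
    by (rule nth_equalityI) (auto simp: edge len nth_Cons')
  moreover have "map (fst \<circ> GR_edge k D) (T ! j) = [a..<a + k ! j] @ [a + k ! j]"
    by (rule nth_equalityI) (auto simp: edge len nth_append)
  ultimately show ?thesis
    unfolding T_def[symmetric] mset_map[symmetric] by simp
qed

lemma image_mset_concat_cong: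
  assumes "\<And>xs. xs \<in> set xss \<Longrightarrow> image_mset f (mset xs) = image_mset g (mset xs)"
  shows "image_mset f (mset (concat xss)) = image_mset g (mset (concat xss))"
  using assms by (induction xss) auto

lemma GR_edges_targets_eq_sources:
  assumes D: "D \<in> Dk k"
  shows "image_mset snd (GR_edges k D) = image_mset fst (GR_edges k D)"
proof -
  let ?T = "fillT k D"
  have edges: "image_mset f (GR_edges k D) = image_mset (f \<circ> GR_edge k D) (mset (concat ?T))" for f
    unfolding GR_edges_def mset_map image_mset.compositionality fillT_shape(3)[OF D, symmetric] ..
  have "image_mset (snd \<circ> GR_edge k D) (mset (concat ?T)) = image_mset (fst \<circ> GR_edge k D) (mset (concat ?T))"
    by (rule image_mset_concat_cong)
      (auto simp: in_set_conv_nth fillT_shape(1)[OF D] GR_edge_column_balanced[OF D])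
  then show ?thesis
    unfolding edges .
qed

lemma size_filter_mset_eq_count_image_mset:
  "size (filter_mset (\<lambda>x. f x = a) M) = count (image_mset f M) a"
  by (induction M) auto

lemma out_deg_GR_edges: "out_deg (GR_edges k D) a = card (S_rank k D a)"
proof -
  have "fst \<circ> GR_edge k D = rankR k D"
    by (auto simp: GR_edge_def Let_def)
  then have "out_deg (GR_edges k D) a = count (mset (map (rankR k D) [1..<length D + 1])) a"
    unfolding out_deg_def size_filter_mset_eq_count_image_mset GR_edges_def mset_map
      image_mset.compositionality by simp
  also have "\<dots> = length (filter (\<lambda>x. a = rankR k D x) [1..<length D + 1])"
    by (simp only: count_mset count_list_eq_length_filter filter_map length_map comp_def)
  also have "\<dots> = card (set (filter (\<lambda>x. a = rankR k D x) [1..<length D + 1]))"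
    by (rule distinct_card[symmetric]) simp
  also have "set (filter (\<lambda>x. a = rankR k D x) [1..<length D + 1]) = S_rank k D a"
    by (auto simp: S_rank_def)
  finally show ?thesis .
qed

theorem mainTheorem9:
  fixes k :: "nat list" and D :: "int list"
  assumes "length k \<ge> 1"
    and "\<forall>x\<in>set k. x > 0"
    and "D \<in> Dk k"
  shows "\<forall>a\<in>GR_vertices k D.
           in_deg (GR_edges k D) a = out_deg (GR_edges k D) a
         \<and> out_deg (GR_edges k D) a = card (S_rank k D a)"
  using GR_edges_targets_eq_sources[OF assms(3)] out_deg_GR_edges
  by (simp add: in_deg_def out_deg_def size_filter_mset_eq_count_image_mset)

end
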